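(* Let $q$ be a set of operations on a set $\Omega$ and write $\sim$ for $\sim_q$. Then: (1) $\mathrm{Sim}(q)/\!\sim\;=\mathrm{Aut}(q/\!\sim)$, where $\mathrm{Sim}(q)/\!\sim\;=\{\pi/\!\sim:\pi\in\mathrm{Sim}(q)\}$; (2) a quantifier $Q$ on $\Omega$ belongs to $\mathrm{Inv}(\mathrm{Sim}(q))$ if and only if $Q/\!\sim\;\in\mathrm{Inv}(\mathrm{Aut}(q/\!\sim))$.
   Context: A similarity on $\Omega$ is a relation $\pi\subseteq\Omega\times\Omega$ such that every $a$ has some $b$ with $a\pi b$ and every $b$ has some $a$ with $a\pi b$; for relations $R,S\subseteq\Omega^k$, $R\,\pi\,S$ means that coordinatewise $\bar a\pi\bar b$ implies ($\bar a\in R\iff\bar b\in S$). A set of operations is a set of finitary relations and quantifiers (subsets of $\mathcal P(\Omega^{k_1})\times\cdots\times\mathcal P(\Omega^{k_l})$) on $\Omega$; $\mathscr L^-_{\infty\infty}(q)$ is the equality-free infinitary logic with predicate and Lindström quantifier symbols for members of $q$. $a\sim_q b$ iff for all formulas $\phi(x,\bar y)$ of $\mathscr L^-_{\infty\infty}(q)$ and tuples $\bar c$, $\phi(a,\bar c)\iff\phi(b,\bar c)$. A relation is invariant under a similarity or equivalence $\rho$ if $\bar a\rho\bar b$ implies $\bar a\in R\iff\bar b\in R$; a quantifier $Q$ is $\sim$-invariant under $\pi$ if for all $\bar R,\bar S$ of its type with each component invariant under $\sim$ and $R_i\,\pi\,S_i$: $\bar R\in Q\iff\bar S\in Q$. $\mathrm{Sim}(q)$: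 similarities under which all relations of $q$ are invariant and all quantifiers of $q$ are $\sim_q$-invariant. For a set $\Pi$ of similarities, $a\approx_\Pi b$ iff for each finite $k$ and $\bar c\in\Omega^k$ some $\pi\in\Pi$ has $(a,\bar c)\,\pi\,(b,\bar c)$; $\mathrm{Inv}(\Pi)$ is the set of relations invariant under all $\pi\in\Pi$ and quantifiers $\approx_\Pi$-invariant under all $\pi\in\Pi$. With $[a]$ the $\sim$-class of $a$: $\pi/\!\sim\;=\{([a],[b]):a\pi b\}$; for $R\subseteq\Omega^k$, $R/\!\sim\;=\{([a_1],\dots,[a_k]):(a_1,\dots,a_k)\in R\}$; for $R'\subseteq(\Omega/\!\sim)^k$, $\cup R'=\{\bar a\in\Omega^k:([a_1],\dots,[a_k])\in R'\}$; for a quantifier $Q$ on $\Omega$, $Q/\!\sim\;=\{(R'_1,\dots,R'_l):(\cup R'_1,\dots,\cup R'_l)\in Q\}$; $q/\!\sim$ is the set of $R/\!\sim$ and $Q/\!\sim$ for relations $R$ and quantifiers $Q$ in $q$. For a set $\mathcal Q$ of relations and quantifiers on a set $\Omega'$, $\mathrm{Aut}(\mathcal Q)$ is the set of permutations $f$ of $\Omega'$ with $fR=R$ for relations and $(R_1,\dots,R_l)\in Q\iff(fR_1,\dots,fR_l)\in Q$ for quantifiers in $\mathcal Q$; for a set $H$ of permutations of $\Omega'$, $\mathrm{Inv}(H)$ is the set of relations and quantifiers on $\Omega'$ preserved in this sense by all $f\in H$. *)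

theory Defs
  imports Main
begin

text \<open>Tuples are lists; a k-ary relation is a set of lists of length k.
  A quantifier of type (k1,...,kl) is a set of l-element lists of relations,
  the i-th of arity ki.\<close>

datatype 'a oper = Rel nat "'a list set" | Quant "nat list" "'a list set list set"

definition rel_on :: "'a set \<Rightarrow> nat \<Rightarrow> 'a list set \<Rightarrow> bool" where
  "rel_on A k R \<longleftrightarrow> (\<forall>xs\<in>R. length xs = k \<and> set xs \<subseteq> A)"

definition args_on :: "'a set \<Rightarrow> nat list \<Rightarrow> 'a list set list \<Rightarrow> bool" where
  "args_on A ks Rs \<longleftrightarrow> length Rs = length ks \<and> (\<forall>i<length ks. rel_on A (ks ! i) (Rs ! i))"

fun wf_oper :: "'a set \<Rightarrow> 'a oper \<Rightarrow> bool" where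
  "wf_oper A (Rel k R) = rel_on A k R"
| "wf_oper A (Quant ks Q) = (\<forall>Rs\<in>Q. args_on A ks Rs)"

definition similarity :: "('a \<times> 'a) set \<Rightarrow> bool" where
  "similarity \<pi> \<longleftrightarrow> (\<forall>a. \<exists>b. (a, b) \<in> \<pi>) \<and> (\<forall>b. \<exists>a. (a, b) \<in> \<pi>)"

definition rel_sim :: "('a \<times> 'a) set \<Rightarrow> 'a list set \<Rightarrow> 'a list set \<Rightarrow> bool" where
  "rel_sim \<pi> R S \<longleftrightarrow>
     (\<forall>as bs. list_all2 (\<lambda>a b. (a, b) \<in> \<pi>) as bs \<longrightarrow> (as \<in> R \<longleftrightarrow> bs \<in> S))"

text \<open>Q is E-invariant under pi (E an equivalence, e.g. sim_q or approx_Pi).\<close>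
definition quant_inv :: "('a \<times> 'a) set \<Rightarrow> ('a \<times> 'a) set \<Rightarrow> nat list \<Rightarrow> 'a list set list set \<Rightarrow> bool" where
  "quant_inv E \<pi> ks Q \<longleftrightarrow>
     (\<forall>Rs Ss. args_on UNIV ks Rs \<longrightarrow> args_on UNIV ks Ss \<longrightarrow>
        (\<forall>R\<in>set Rs. rel_sim E R R) \<longrightarrow> (\<forall>S\<in>set Ss. rel_sim E S S) \<longrightarrow>
        list_all2 (rel_sim \<pi>) Rs Ss \<longrightarrow> (Rs \<in> Q \<longleftrightarrow> Ss \<in> Q))"

text \<open>Variables have type 'v, assignments are functions 'v => 'a. A formula is
  identified with the set of assignments satisfying it; defin q A says that A is
  the extension of some formula of the logic.\<close>

definition upds :: "('v \<Rightarrow> 'a) \<Rightarrow> 'v list \<Rightarrow> 'a list \<Rightarrow> ('v \<Rightarrow> 'a)" where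
  "upds s vs as = fold (\<lambda>(v, a) f. f(v := a)) (zip vs as) s"

inductive defin :: "'a oper set \<Rightarrow> ('v \<Rightarrow> 'a) set \<Rightarrow> bool" for q where
  atom: "Rel k R \<in> q \<Longrightarrow> length vs = k \<Longrightarrow> defin q {s. map s vs \<in> R}"
| neg: "defin q A \<Longrightarrow> defin q (- A)"
| conj: "(\<And>A. A \<in> F \<Longrightarrow> defin q A) \<Longrightarrow> defin q (\<Inter> F)"
| ex: "defin q A \<Longrightarrow> defin q {s. \<exists>t\<in>A. \<forall>v. v \<notin> W \<longrightarrow> t v = s v}"
| quant: "Quant ks Q \<in> q \<Longrightarrow> length vss = length ks \<Longrightarrow> length As = length ks \<Longrightarrow>
     (\<forall>i<length ks. length (vss ! i) = ks ! i \<and> distinct (vss ! i) \<and> defin q (As ! i)) \<Longrightarrow>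
     defin q {s. map (\<lambda>i. {as. length as = ks ! i \<and> upds s (vss ! i) as \<in> As ! i}) [0..<length ks] \<in> Q}"

definition fin_supp :: "('v \<Rightarrow> 'a) set \<Rightarrow> bool" where
  "fin_supp A \<longleftrightarrow> (\<exists>V. finite V \<and> (\<forall>s t. (\<forall>v\<in>V. s v = t v) \<longrightarrow> (s \<in> A \<longleftrightarrow> t \<in> A)))"

text \<open>a sim_q b: for all formulas phi(x, ybar) (finitely many free variables)
  and all parameters, phi(a, cbar) iff phi(b, cbar).\<close>
definition simeq :: "'v itself \<Rightarrow> 'a oper set \<Rightarrow> ('a \<times> 'a) set" where
  "simeq V q = {(a, b). \<forall>(A :: ('v \<Rightarrow> 'a) set) x s. defin q A \<longrightarrow> fin_supp A \<longrightarrow>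
        (s(x := a) \<in> A \<longleftrightarrow> s(x := b) \<in> A)}"

definition Sim :: "'v itself \<Rightarrow> 'a oper set \<Rightarrow> ('a \<times> 'a) set set" where
  "Sim V q = {\<pi>. similarity \<pi> \<and>
     (\<forall>k R. Rel k R \<in> q \<longrightarrow> rel_sim \<pi> R R) \<and>
     (\<forall>ks Q. Quant ks Q \<in> q \<longrightarrow> quant_inv (simeq V q) \<pi> ks Q)}"

definition approx :: "('a \<times> 'a) set set \<Rightarrow> ('a \<times> 'a) set" where
  "approx \<Pi> = {(a, b). \<forall>cs. \<exists>\<pi>\<in>\<Pi>. list_all2 (\<lambda>x y. (x, y) \<in> \<pi>) (a # cs) (b # cs)}"

definition Inv :: "('a \<times> 'a) set set \<Rightarrow> 'a oper set" where
  "Inv \<Pi> = {op. wf_oper UNIV op \<and>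
     (case op of Rel k R \<Rightarrow> (\<forall>\<pi>\<in>\<Pi>. rel_sim \<pi> R R)
               | Quant ks Q \<Rightarrow> (\<forall>\<pi>\<in>\<Pi>. quant_inv (approx \<Pi>) \<pi> ks Q))}"

definition cls :: "'v itself \<Rightarrow> 'a oper set \<Rightarrow> 'a \<Rightarrow> 'a set" where
  "cls V q a = simeq V q `` {a}"

definition qcarrier :: "'v itself \<Rightarrow> 'a oper set \<Rightarrow> 'a set set" where
  "qcarrier V q = UNIV // simeq V q"

definition quot_sim :: "'v itself \<Rightarrow> 'a oper set \<Rightarrow> ('a \<times> 'a) set \<Rightarrow> ('a set \<times> 'a set) set" where
  "quot_sim V q \<pi> = {(cls V q a, cls V q b) | a b. (a, b) \<in> \<pi>}"

definition quot_rel :: "'v itself \<Rightarrow> 'a oper set \<Rightarrow> 'a list set \<Rightarrow> 'a set list set" where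
  "quot_rel V q R = map (cls V q) ` R"

definition cup :: "'v itself \<Rightarrow> 'a oper set \<Rightarrow> 'a set list set \<Rightarrow> 'a list set" where
  "cup V q R' = {as. map (cls V q) as \<in> R'}"

definition quot_quant :: "'v itself \<Rightarrow> 'a oper set \<Rightarrow> nat list \<Rightarrow> 'a list set list set \<Rightarrow> 'a set list set list set" where
  "quot_quant V q ks Q = {Rs'. args_on (qcarrier V q) ks Rs' \<and> map (cup V q) Rs' \<in> Q}"

fun quot_oper :: "'v itself \<Rightarrow> 'a oper set \<Rightarrow> 'a oper \<Rightarrow> 'a set oper" where
  "quot_oper V q (Rel k R) = Rel k (quot_rel V q R)"
| "quot_oper V q (Quant ks Q) = Quant ks (quot_quant V q ks Q)"

definition quot_ops :: "'v itself \<Rightarrow> 'a oper set \<Rightarrow> 'a set oper set" where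
  "quot_ops V q = quot_oper V q ` q"

fun preserves :: "'b set \<Rightarrow> ('b \<Rightarrow> 'b) \<Rightarrow> 'b oper \<Rightarrow> bool" where
  "preserves A f (Rel k R) = (map f ` R = R)"
| "preserves A f (Quant ks Q) =
     (\<forall>Rs. args_on A ks Rs \<longrightarrow> (Rs \<in> Q \<longleftrightarrow> map (\<lambda>R. map f ` R) Rs \<in> Q))"

definition Aut :: "'b set \<Rightarrow> 'b oper set \<Rightarrow> ('b \<Rightarrow> 'b) set" where
  "Aut A ops = {f. bij_betw f A A \<and> (\<forall>op\<in>ops. preserves A f op)}"

definition InvA :: "'b set \<Rightarrow> ('b \<Rightarrow> 'b) set \<Rightarrow> 'b oper set" where
  "InvA A H = {op. wf_oper A op \<and> (\<forall>f\<in>H. preserves A f op)}"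

definition graph_on :: "'b set \<Rightarrow> ('b \<Rightarrow> 'b) \<Rightarrow> ('b \<times> 'b) set" where
  "graph_on A f = {(x, f x) | x. x \<in> A}"

end

theory Submission
  imports Defs
begin

text \<open>Definable sets of assignments are invariant under moving every variable along a
  similarity \<open>\<pi> \<in> Sim q\<close>: atoms and quantifiers of \<open>q\<close> are invariant by assumption, and
  the existential case only needs that \<open>\<pi>\<close> is total in both directions. Consequently
  \<open>\<pi>\<close> relates \<open>\<sim>\<close>-equivalent elements exactly to \<open>\<sim>\<close>-equivalent ones, so it induces a
  permutation of \<open>\<Omega>/\<sim>\<close>, which preserves \<open>q/\<sim>\<close>. Conversely an automorphism \<open>f\<close> of \<open>q/\<sim>\<close>
  is induced by the similarity \<open>{(a, b). f [a] = [b]}\<close>, which lies in \<open>Sim q\<close> because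
  relations of \<open>q\<close> are \<open>\<sim>\<close>-invariant and quantifiers only need to be checked on
  \<open>\<sim>\<close>-invariant arguments, i.e. on unions of classes. Finally \<open>\<sim>\<close> itself belongs to
  \<open>Sim q\<close>, whence \<open>\<approx>\<^bsub>Sim q\<^esub>\<close> is \<open>\<sim>\<close>, and the invariance of a quantifier under \<open>\<pi>\<close> is the
  invariance of its quotient under the induced automorphism.\<close>

lemma upds_Nil_vars [simp]: "upds s [] as = s"
  and upds_Nil_vals [simp]: "upds s vs [] = s"
  by (simp_all add: upds_def)

lemma upds_Cons: "upds s (v # vs) (a # as) = upds (s(v := a)) vs as"
  by (simp add: upds_def)

lemma upds_notin: "v \<notin> set vs \<Longrightarrow> upds s vs as v = s v"
proof (induction vs arbitrary: s as)
  case (Cons w vs)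
  then show ?case by (cases as) (auto simp: upds_Cons)
qed simp

lemma map_upds_vars: "distinct vs \<Longrightarrow> length as = length vs \<Longrightarrow> map (upds s vs as) vs = as"
proof (induction vs arbitrary: s as)
  case (Cons w vs)
  then show ?case by (cases as) (auto simp: upds_Cons upds_notin)
qed simp

lemma upds_pointwise:
  "(\<And>v. P (s v) (t v)) \<Longrightarrow> list_all2 P as bs \<Longrightarrow> P (upds s vs as v) (upds t vs bs v)"
proof (induction vs arbitrary: s t as bs)
  case (Cons w vs)
  show ?case
  proof (cases as)
    case (Cons a as')
    with Cons.prems(2) obtain b bs' where "bs = b # bs'" "P a b" "list_all2 P as' bs'"
      by (cases bs) auto
    then have "P (upds (s(w := a)) vs as' v) (upds (t(w := b)) vs bs' v)"
      using Cons.prems(1) by (intro Cons.IH) auto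
    with \<open>as = a # as'\<close> \<open>bs = b # bs'\<close> show ?thesis by (simp add: upds_Cons)
  qed (use Cons.prems in simp)
qed simp

lemma finite_upds_differ:
  assumes "finite {v. s v \<noteq> t v}"
  shows "finite {v. upds s vs as v \<noteq> upds t vs bs v}"
proof -
  have "{v. upds s vs as v \<noteq> upds t vs bs v} \<subseteq> {v. s v \<noteq> t v} \<union> set vs"
  proof
    fix v assume "v \<in> {v. upds s vs as v \<noteq> upds t vs bs v}"
    then show "v \<in> {v. s v \<noteq> t v} \<union> set vs"
      using upds_notin[of v vs s as] upds_notin[of v vs t bs] by (cases "v \<in> set vs") auto
  qed
  with assms show ?thesis by (simp add: finite_subset)
qed

lemma simeq_refl: "(a, a) \<in> simeq V q"
  and simeq_sym: "(a, b) \<in> simeq V q \<Longrightarrow> (b, a) \<in> simeq V q"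
  by (simp_all add: simeq_def)

lemma equiv_simeq: "equiv UNIV (simeq V q)"
  unfolding equiv_def refl_on_def sym_def trans_def simeq_def by blast

lemma finite_pointwise_invariance:
  assumes single: "\<And>s x a b. (a, b) \<in> E \<Longrightarrow> s(x := a) \<in> A \<longleftrightarrow> s(x := b) \<in> A"
    and refl: "\<And>a. (a, a) \<in> E"
    and fin: "finite {v. s v \<noteq> t v}" and rel: "\<And>v. (s v, t v) \<in> E"
  shows "s \<in> A \<longleftrightarrow> t \<in> A"
proof -
  have "s \<in> A \<longleftrightarrow> t \<in> A" if "finite D" "{v. s v \<noteq> t v} \<subseteq> D" "\<forall>v. (s v, t v) \<in> E" for D s
    using that
  proof (induction D arbitrary: s rule: finite_induct)
    case empty
    then have "s = t" by auto
    then show ?case by simp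
  next
    case (insert x D)
    have "s(x := t x) \<in> A \<longleftrightarrow> t \<in> A"
      using insert.prems refl by (intro insert.IH) auto
    moreover have "s(x := s x) \<in> A \<longleftrightarrow> s(x := t x) \<in> A"
      using single insert.prems(2) by blast
    ultimately show ?case by simp
  qed
  then show ?thesis using fin rel by blast
qed

lemma defin_simeq_invariant:
  fixes V :: "'v itself" and A :: "('v \<Rightarrow> 'a) set"
  assumes "defin q A" and "finite {v. s v \<noteq> t v}" and "\<And>v. (s v, t v) \<in> simeq V q"
  shows "s \<in> A \<longleftrightarrow> t \<in> A"
  using assms
proof (induction arbitrary: s t rule: defin.induct)
  case (atom k R vs)
  have "fin_supp {s :: 'v \<Rightarrow> 'a. map s vs \<in> R}"
    unfolding fin_supp_def by (metis (mono_tags) List.finite_set map_eq_conv mem_Collect_eq)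
  \<comment> \<open>atoms have finite support, so one variable at a time this is the definition of \<open>\<sim>\<close>\<close>
  with defin.atom[OF atom.hyps]
  have "(a, b) \<in> simeq V q \<Longrightarrow> s(x := a) \<in> {s. map s vs \<in> R} \<longleftrightarrow> s(x := b) \<in> {s. map s vs \<in> R}"
    for s x a b
    unfolding simeq_def by blast
  from finite_pointwise_invariance[OF this simeq_refl atom.prems] show ?case .
next
  case (ex A W)
  let ?E = "{s. \<exists>t\<in>A. \<forall>v. v \<notin> W \<longrightarrow> t v = s v}"
  have "t \<in> ?E" if "finite {v. s v \<noteq> t v}" "\<forall>v. (s v, t v) \<in> simeq V q" "s \<in> ?E" for s t
  proof -
    obtain u where u: "u \<in> A" "\<forall>v. v \<notin> W \<longrightarrow> u v = s v" using \<open>s \<in> ?E\<close> by blast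
    define u' where "u' v = (if v \<in> W then u v else t v)" for v
    have "{v. u v \<noteq> u' v} \<subseteq> {v. s v \<noteq> t v}" using u by (auto simp: u'_def)
    with that(1) have "finite {v. u v \<noteq> u' v}" by (rule finite_subset[rotated])
    moreover have "(u v, u' v) \<in> simeq V q" for v using u that(2) by (simp add: u'_def simeq_refl)
    ultimately have "u' \<in> A" using ex.IH u(1) by blast
    then show ?thesis by (intro CollectI bexI[of _ u']) (auto simp: u'_def)
  qed
  moreover have "{v. t v \<noteq> s v} = {v. s v \<noteq> t v}" by auto
  with ex.prems(1) have "finite {v. t v \<noteq> s v}" by simp
  moreover have "\<forall>v. (t v, s v) \<in> simeq V q" using ex.prems(2) by (blast intro: simeq_sym)
  ultimately show ?case using ex.prems by blast
next
  case (quant ks Q vss As)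
  have "upds s (vss ! i) as \<in> As ! i \<longleftrightarrow> upds t (vss ! i) as \<in> As ! i" if "i < length ks" for i as
  proof -
    have "(upds s (vss ! i) as v, upds t (vss ! i) as v) \<in> simeq V q" for v
      using upds_pointwise[of "\<lambda>a b. (a, b) \<in> simeq V q" s t as as, OF quant.prems(2)]
      by (simp add: list.rel_refl simeq_refl)
    with quant.IH that finite_upds_differ[OF quant.prems(1)] show ?thesis by blast
  qed
  then have "map (\<lambda>i. {as. length as = ks ! i \<and> upds s (vss ! i) as \<in> As ! i}) [0..<length ks]
      = map (\<lambda>i. {as. length as = ks ! i \<and> upds t (vss ! i) as \<in> As ! i}) [0..<length ks]"
    by (intro map_cong) auto
  then show ?case by (simp only: mem_Collect_eq)
qed auto

lemma rel_sim_simeq_section: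
  fixes V :: "'v itself" and A :: "('v \<Rightarrow> 'a) set"
  assumes "defin q A"
  shows "rel_sim (simeq V q)
    {as. length as = k \<and> upds s vs as \<in> A} {as. length as = k \<and> upds s vs as \<in> A}"
  unfolding rel_sim_def
proof (intro allI impI)
  fix as bs assume rel: "list_all2 (\<lambda>a b. (a, b) \<in> simeq V q) as bs"
  have "upds s vs as \<in> A \<longleftrightarrow> upds s vs bs \<in> A"
    using upds_pointwise[of "\<lambda>a b. (a, b) \<in> simeq V q" s s, OF simeq_refl rel]
    by (intro defin_simeq_invariant[where V = V, OF assms] finite_upds_differ) simp_all
  with list_all2_lengthD[OF rel] show "as \<in> {as. length as = k \<and> upds s vs as \<in> A}
      \<longleftrightarrow> bs \<in> {as. length as = k \<and> upds s vs as \<in> A}" by simp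
qed

lemma similarity_choice:
  assumes "similarity \<pi>"
  obtains g where "\<And>a. (a, g a) \<in> \<pi>"
proof -
  from assms have "\<forall>a. \<exists>b. (a, b) \<in> \<pi>" by (simp add: similarity_def)
  with that show ?thesis by (metis choice)
qed

lemma similarity_converse [simp]: "similarity (\<pi>\<inverse>) \<longleftrightarrow> similarity \<pi>"
  by (auto simp: similarity_def)

lemma rel_sim_converse [simp]: "rel_sim (\<pi>\<inverse>) R S \<longleftrightarrow> rel_sim \<pi> S R"
proof -
  have "(\<lambda>a b. (a, b) \<in> \<pi>\<inverse>) = (\<lambda>a b. (a, b) \<in> \<pi>)\<inverse>\<inverse>" by auto
  then show ?thesis unfolding rel_sim_def by (auto simp: list.rel_flip)
qed

lemma quant_inv_converse:
  assumes "quant_inv E \<pi> ks Q"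
  shows "quant_inv E (\<pi>\<inverse>) ks Q"
proof -
  have "rel_sim (\<pi>\<inverse>) = (rel_sim \<pi>)\<inverse>\<inverse>" by (simp add: fun_eq_iff)
  then have "list_all2 (rel_sim (\<pi>\<inverse>)) Rs Ss \<longleftrightarrow> list_all2 (rel_sim \<pi>) Ss Rs" for Rs Ss
    by (simp add: list.rel_flip)
  with assms show ?thesis unfolding quant_inv_def by blast
qed

lemma Sim_similarity: "\<pi> \<in> Sim V q \<Longrightarrow> similarity \<pi>"
  by (simp add: Sim_def)

lemma Sim_converse: "\<pi> \<in> Sim V q \<Longrightarrow> \<pi>\<inverse> \<in> Sim V q"
  by (auto simp: Sim_def intro: quant_inv_converse)

lemma defin_Sim_invariant:
  fixes V :: "'v itself" and A :: "('v \<Rightarrow> 'a) set"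
  assumes "defin q A" and "\<pi> \<in> Sim V q" and "\<And>v. (s v, t v) \<in> \<pi>"
  shows "s \<in> A \<longleftrightarrow> t \<in> A"
  using assms
proof (induction arbitrary: \<pi> s t rule: defin.induct)
  case (atom k R vs)
  have "list_all2 (\<lambda>a b. (a, b) \<in> \<pi>) (map s vs) (map t vs)"
    using atom.prems(2) by (simp add: list_all2_conv_all_nth)
  moreover have "rel_sim \<pi> R R" using atom.prems(1) atom.hyps(1) by (simp add: Sim_def)
  ultimately show ?case by (simp add: rel_sim_def)
next
  case (ex A W)
  let ?E = "{s. \<exists>t\<in>A. \<forall>v. v \<notin> W \<longrightarrow> t v = s v}"
  have "t \<in> ?E" if "\<pi> \<in> Sim V q" "\<forall>v. (s v, t v) \<in> \<pi>" "s \<in> ?E" for \<pi> s t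
  proof -
    obtain u where u: "u \<in> A" "\<forall>v. v \<notin> W \<longrightarrow> u v = s v" using \<open>s \<in> ?E\<close> by blast
    obtain g where g: "\<And>a. (a, g a) \<in> \<pi>"
      using similarity_choice Sim_similarity[OF \<open>\<pi> \<in> Sim V q\<close>] by blast
    define u' where "u' v = (if v \<in> W then g (u v) else t v)" for v
    have "(u v, u' v) \<in> \<pi>" for v using u that(2) g by (simp add: u'_def)
    then have "u' \<in> A" using ex.IH u(1) that(1) by blast
    then show ?thesis by (intro CollectI bexI[of _ u']) (auto simp: u'_def)
  qed
  moreover have "\<forall>v. (t v, s v) \<in> \<pi>\<inverse>" using ex.prems(2) by simp
  ultimately show ?case using ex.prems(1) Sim_converse by blast
next
  case (quant ks Q vss As)
  define Rs where
    "Rs = map (\<lambda>i. {as. length as = ks ! i \<and> upds s (vss ! i) as \<in> As ! i}) [0..<length ks]"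
  define Ss where
    "Ss = map (\<lambda>i. {as. length as = ks ! i \<and> upds t (vss ! i) as \<in> As ! i}) [0..<length ks]"
  have "rel_sim \<pi> (Rs ! i) (Ss ! i)" if "i < length ks" for i
    unfolding rel_sim_def
  proof (intro allI impI)
    fix as bs assume rel: "list_all2 (\<lambda>a b. (a, b) \<in> \<pi>) as bs"
    have "(upds s (vss ! i) as v, upds t (vss ! i) bs v) \<in> \<pi>" for v
      using upds_pointwise[of "\<lambda>a b. (a, b) \<in> \<pi>" s t, OF quant.prems(2) rel] .
    then have "upds s (vss ! i) as \<in> As ! i \<longleftrightarrow> upds t (vss ! i) bs \<in> As ! i"
      using quant.IH that quant.prems(1) by blast
    with list_all2_lengthD[OF rel] that show "as \<in> Rs ! i \<longleftrightarrow> bs \<in> Ss ! i"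
      by (simp add: Rs_def Ss_def)
  qed
  then have "list_all2 (rel_sim \<pi>) Rs Ss"
    by (simp add: list_all2_conv_all_nth Rs_def Ss_def)
  moreover have "args_on UNIV ks Rs" "args_on UNIV ks Ss"
    by (auto simp: args_on_def rel_on_def Rs_def Ss_def)
  \<comment> \<open>\<open>Sim q\<close> only asks quantifiers to respect \<open>\<pi>\<close> on \<open>\<sim>\<close>-invariant arguments\<close>
  moreover have "\<forall>R\<in>set Rs. rel_sim (simeq V q) R R" "\<forall>S\<in>set Ss. rel_sim (simeq V q) S S"
    using quant.IH by (auto simp: Rs_def Ss_def intro!: rel_sim_simeq_section)
  moreover have "quant_inv (simeq V q) \<pi> ks Q"
    using quant.hyps(1) quant.prems(1) by (simp add: Sim_def)
  ultimately have "Rs \<in> Q \<longleftrightarrow> Ss \<in> Q" unfolding quant_inv_def by blast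
  then show ?case by (simp add: Rs_def Ss_def)
qed blast+

lemma Sim_respects_simeq:
  fixes V :: "'v itself"
  assumes \<pi>: "\<pi> \<in> Sim V q" and ab: "(a, b) \<in> \<pi>" "(a', b') \<in> \<pi>" and "(a, a') \<in> simeq V q"
  shows "(b, b') \<in> simeq V q"
proof -
  obtain h where h: "\<And>c. (c, h c) \<in> \<pi>\<inverse>"
    using similarity_choice Sim_similarity[OF \<pi>] similarity_converse by metis
  \<comment> \<open>pulling the parameters back along \<open>\<pi>\<close> reduces the claim to \<open>a \<sim> a'\<close>\<close>
  have "s(x := b) \<in> A \<longleftrightarrow> s(x := b') \<in> A"
    if A: "defin q A" "fin_supp A" for A :: "('v \<Rightarrow> 'a) set" and x s
  proof -
    have "(h \<circ> s)(x := a) \<in> A \<longleftrightarrow> (h \<circ> s)(x := a') \<in> A"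
      using assms(4) A unfolding simeq_def by blast
    moreover have "(h \<circ> s)(x := a) \<in> A \<longleftrightarrow> s(x := b) \<in> A"
      by (rule defin_Sim_invariant[OF A(1) \<pi>]) (use ab h in auto)
    moreover have "(h \<circ> s)(x := a') \<in> A \<longleftrightarrow> s(x := b') \<in> A"
      by (rule defin_Sim_invariant[OF A(1) \<pi>]) (use ab h in auto)
    ultimately show ?thesis by simp
  qed
  then show ?thesis by (simp add: simeq_def)
qed

lemma Sim_simeq_iff:
  assumes "\<pi> \<in> Sim V q" and "(a, b) \<in> \<pi>" "(a', b') \<in> \<pi>"
  shows "(a, a') \<in> simeq V q \<longleftrightarrow> (b, b') \<in> simeq V q"
proof
  assume "(a, a') \<in> simeq V q"
  with assms show "(b, b') \<in> simeq V q" by (rule Sim_respects_simeq)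
next
  assume "(b, b') \<in> simeq V q"
  with Sim_respects_simeq[OF Sim_converse[OF assms(1)], of b a b' a'] assms(2,3)
  show "(a, a') \<in> simeq V q" by simp
qed

lemma Rel_simeq_invariant:
  fixes V :: "'v itself"
  assumes inf: "infinite (UNIV :: 'v set)" and R: "Rel k R \<in> q" and wf: "rel_on UNIV k R"
  shows "rel_sim (simeq V q) R R"
  unfolding rel_sim_def
proof (intro allI impI)
  fix as bs assume rel: "list_all2 (\<lambda>a b. (a, b) \<in> simeq V q) as bs"
  note len = list_all2_lengthD[OF rel]
  show "as \<in> R \<longleftrightarrow> bs \<in> R"
  proof (cases "length as = k")
    case False
    with wf len show ?thesis by (auto simp: rel_on_def)
  next
    case True
    \<comment> \<open>read \<open>R\<close> as an atomic formula in \<open>k\<close> distinct variables\<close>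
    obtain F :: "'v set" where F: "finite F" "card F = k"
      using infinite_arbitrarily_large[OF inf] by blast
    obtain vs where "set vs = F" "distinct vs"
      using finite_distinct_list[OF F(1)] by blast
    with F(2) have vs: "distinct vs" "length vs = k" by (auto simp: distinct_card)
    define s :: "'v \<Rightarrow> 'a" where "s = (\<lambda>_. undefined)"
    have "upds s vs as \<in> {s. map s vs \<in> R} \<longleftrightarrow> upds s vs bs \<in> {s. map s vs \<in> R}"
      using upds_pointwise[of "\<lambda>a b. (a, b) \<in> simeq V q" s s, OF simeq_refl rel]
      by (intro defin_simeq_invariant[where V = V, OF defin.atom[OF R vs(2)]] finite_upds_differ)
        simp_all
    with vs True len show ?thesis by (simp add: map_upds_vars)
  qed
qed

lemma simeq_in_Sim:
  fixes V :: "'v itself"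
  assumes inf: "infinite (UNIV :: 'v set)" and wf: "\<forall>op\<in>q. wf_oper UNIV op"
  shows "simeq V q \<in> Sim V q"
proof -
  have "similarity (simeq V q)" by (auto simp: similarity_def intro: simeq_refl)
  moreover have "rel_sim (simeq V q) R R" if "Rel k R \<in> q" for k R
    using Rel_simeq_invariant[OF inf that] wf that by fastforce
  moreover have "R = S" if "rel_sim (simeq V q) R S" for R S
  proof (rule set_eqI)
    fix as
    have "list_all2 (\<lambda>a b. (a, b) \<in> simeq V q) as as" by (simp add: list.rel_refl simeq_refl)
    with that show "as \<in> R \<longleftrightarrow> as \<in> S" by (simp add: rel_sim_def)
  qed
  then have "list_all2 (rel_sim (simeq V q)) Rs Ss \<Longrightarrow> Rs = Ss" for Rs Ss
    by (simp add: list_all2_mono flip: list.rel_eq)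
  then have "quant_inv (simeq V q) (simeq V q) ks Q" for ks Q
    unfolding quant_inv_def by blast
  ultimately show ?thesis by (simp add: Sim_def)
qed

lemma approx_Sim_eq_simeq:
  fixes V :: "'v itself"
  assumes inf: "infinite (UNIV :: 'v set)" and wf: "\<forall>op\<in>q. wf_oper UNIV op"
  shows "approx (Sim V q) = simeq V q"
proof (intro set_eqI iffI; clarify)
  fix a b assume "(a, b) \<in> simeq V q"
  then have "list_all2 (\<lambda>x y. (x, y) \<in> simeq V q) (a # cs) (b # cs)" for cs
    by (simp add: list.rel_refl simeq_refl)
  with simeq_in_Sim[OF inf wf] show "(a, b) \<in> approx (Sim V q)"
    unfolding approx_def by blast
next
  fix a b assume ab: "(a, b) \<in> approx (Sim V q)"
  have "s(x := a) \<in> A \<longleftrightarrow> s(x := b) \<in> A"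
    if A: "defin q A" "fin_supp A" for A :: "('v \<Rightarrow> 'a) set" and x s
  proof -
    obtain W where W: "finite W" "\<forall>s t. (\<forall>v\<in>W. s v = t v) \<longrightarrow> (s \<in> A \<longleftrightarrow> t \<in> A)"
      using A(2) by (auto simp: fin_supp_def)
    \<comment> \<open>a similarity fixing the finitely many parameters \<open>s ` W\<close> and relating \<open>a\<close> to \<open>b\<close>\<close>
    obtain cs where cs: "set cs = s ` W" using finite_list[OF finite_imageI[OF W(1)]] by metis
    from ab obtain \<pi> where \<pi>: "\<pi> \<in> Sim V q" "list_all2 (\<lambda>x y. (x, y) \<in> \<pi>) (a # cs) (b # cs)"
      unfolding approx_def by blast
    then have "(a, b) \<in> \<pi>" and fix_cs: "\<And>c. c \<in> set cs \<Longrightarrow> (c, c) \<in> \<pi>"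
      by (auto simp: list_all2_conv_all_nth in_set_conv_nth)
    obtain g where g: "\<And>c. (c, g c) \<in> \<pi>"
      using similarity_choice Sim_similarity[OF \<pi>(1)] by blast
    define t where "t v = (if v = x then b else if v \<in> W then s v else g (s v))" for v
    have "((s(x := a)) v, t v) \<in> \<pi>" for v
      using \<open>(a, b) \<in> \<pi>\<close> fix_cs[of "s v"] g[of "s v"] cs by (simp add: t_def)
    then have "s(x := a) \<in> A \<longleftrightarrow> t \<in> A"
      by (rule defin_Sim_invariant[OF A(1) \<pi>(1)])
    also have "t \<in> A \<longleftrightarrow> s(x := b) \<in> A"
      by (rule W(2)[rule_format]) (simp add: t_def)
    finally show ?thesis .
  qed
  then show "(a, b) \<in> simeq V q" by (simp add: simeq_def)
qed

lemma cls_eq_iff: "cls V q a = cls V q b \<longleftrightarrow> (a, b) \<in> simeq V q"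
  by (simp add: cls_def equiv_class_eq_iff[OF equiv_simeq])

lemma qcarrier_eq: "qcarrier V q = range (cls V q)"
  by (auto simp: qcarrier_def quotient_def cls_def)

lemma cls_in_qcarrier [simp]: "cls V q a \<in> qcarrier V q"
  by (simp add: qcarrier_eq)

lemma map_cls_eq_iff:
  "map (cls V q) as = map (cls V q) bs \<longleftrightarrow> list_all2 (\<lambda>a b. (a, b) \<in> simeq V q) as bs"
proof -
  have "map (cls V q) as = map (cls V q) bs \<longleftrightarrow> list_all2 (\<lambda>a b. cls V q a = cls V q b) as bs"
    by (simp add: list.rel_map flip: list.rel_eq)
  then show ?thesis by (simp add: cls_eq_iff)
qed

lemma similarity_obtain_image_list:
  assumes "similarity \<pi>"
  obtains bs where "list_all2 (\<lambda>a b. (a, b) \<in> \<pi>) as bs"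
proof -
  obtain g where "\<And>a. (a, g a) \<in> \<pi>" using similarity_choice assms by blast
  then have "list_all2 (\<lambda>a b. (a, b) \<in> \<pi>) as (map g as)" by (simp add: list.rel_map list.rel_refl)
  then show ?thesis by (rule that)
qed

lemma similarity_obtain_preimage_list:
  assumes "similarity \<pi>"
  obtains as where "list_all2 (\<lambda>a b. (a, b) \<in> \<pi>) as bs"
proof -
  obtain h where "\<And>b. (b, h b) \<in> \<pi>\<inverse>" using similarity_choice assms similarity_converse by blast
  then have "list_all2 (\<lambda>a b. (a, b) \<in> \<pi>) (map h bs) bs" by (simp add: list.rel_map list.rel_refl)
  then show ?thesis by (rule that)
qed

definition induces :: "'v itself \<Rightarrow> 'a oper set \<Rightarrow> ('a \<times> 'a) set \<Rightarrow> ('a set \<Rightarrow> 'a set) \<Rightarrow> bool" where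
  "induces V q \<pi> f \<longleftrightarrow> (\<forall>a b. (a, b) \<in> \<pi> \<longrightarrow> f (cls V q a) = cls V q b)"

lemma induces_map_cls:
  assumes "induces V q \<pi> f" and "list_all2 (\<lambda>a b. (a, b) \<in> \<pi>) as bs"
  shows "map f (map (cls V q) as) = map (cls V q) bs"
  using assms(2) by (induction rule: list_all2_induct) (use assms(1) in \<open>simp_all add: induces_def\<close>)

lemma induces_quot_sim:
  assumes sim: "similarity \<pi>" and f: "induces V q \<pi> f"
  shows "quot_sim V q \<pi> = graph_on (qcarrier V q) f"
proof (intro set_eqI iffI)
  fix p assume "p \<in> quot_sim V q \<pi>"
  with f show "p \<in> graph_on (qcarrier V q) f" by (auto simp: quot_sim_def graph_on_def induces_def)
next
  fix p assume "p \<in> graph_on (qcarrier V q) f"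
  then obtain a where p: "p = (cls V q a, f (cls V q a))" by (auto simp: graph_on_def qcarrier_eq)
  obtain g where g: "\<And>a. (a, g a) \<in> \<pi>" using similarity_choice sim by blast
  with f have "f (cls V q a) = cls V q (g a)" by (simp add: induces_def)
  with p g show "p \<in> quot_sim V q \<pi>" unfolding quot_sim_def by blast
qed

lemma induces_quot_rel:
  assumes sim: "similarity \<pi>" and f: "induces V q \<pi> f" and RS: "rel_sim \<pi> R S"
  shows "map f ` quot_rel V q R = quot_rel V q S"
proof (intro set_eqI iffI)
  fix xs assume "xs \<in> map f ` quot_rel V q R"
  then obtain as where as: "as \<in> R" "xs = map f (map (cls V q) as)" by (auto simp: quot_rel_def)
  obtain bs where rel: "list_all2 (\<lambda>a b. (a, b) \<in> \<pi>) as bs"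
    using similarity_obtain_image_list[OF sim] .
  with RS as have "bs \<in> S" by (simp add: rel_sim_def)
  with as induces_map_cls[OF f rel] show "xs \<in> quot_rel V q S" by (simp add: quot_rel_def)
next
  fix xs assume "xs \<in> quot_rel V q S"
  then obtain bs where bs: "bs \<in> S" "xs = map (cls V q) bs" by (auto simp: quot_rel_def)
  obtain as where rel: "list_all2 (\<lambda>a b. (a, b) \<in> \<pi>) as bs"
    using similarity_obtain_preimage_list[OF sim] .
  with RS bs have "as \<in> R" by (simp add: rel_sim_def)
  moreover have "xs = map f (map (cls V q) as)" using bs induces_map_cls[OF f rel] by simp
  ultimately show "xs \<in> map f ` quot_rel V q R" unfolding quot_rel_def by blast
qed

lemma cup_quot_rel:
  assumes "rel_sim (simeq V q) R R"
  shows "cup V q (quot_rel V q R) = R"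
proof (intro set_eqI iffI)
  fix as assume "as \<in> cup V q (quot_rel V q R)"
  then obtain bs where "bs \<in> R" "map (cls V q) as = map (cls V q) bs"
    by (auto simp: cup_def quot_rel_def)
  with assms show "as \<in> R" by (simp add: rel_sim_def map_cls_eq_iff)
qed (auto simp: cup_def quot_rel_def)

lemma rel_on_cup: "rel_on A k R' \<Longrightarrow> rel_on UNIV k (cup V q R')"
  by (auto simp: rel_on_def cup_def)

lemma rel_sim_simeq_cup: "rel_sim (simeq V q) (cup V q R') (cup V q R')"
  by (auto simp: rel_sim_def cup_def simp flip: map_cls_eq_iff)

lemma induces_rel_sim_cup:
  assumes f: "induces V q \<pi> f" and inj: "inj_on f (qcarrier V q)"
    and R': "\<forall>xs\<in>R'. set xs \<subseteq> qcarrier V q"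
  shows "rel_sim \<pi> (cup V q R') (cup V q (map f ` R'))"
  unfolding rel_sim_def
proof (intro allI impI)
  fix as bs assume rel: "list_all2 (\<lambda>a b. (a, b) \<in> \<pi>) as bs"
  have "map (cls V q) as \<in> R' \<longleftrightarrow> map f (map (cls V q) as) \<in> map f ` R'"
  proof
    assume "map f (map (cls V q) as) \<in> map f ` R'"
    then obtain ys where ys: "ys \<in> R'" "map f (map (cls V q) as) = map f ys" by auto
    have "inj_on f (set (map (cls V q) as) \<union> set ys)"
      using R' ys(1) by (intro inj_on_subset[OF inj]) auto
    with map_inj_on[OF ys(2)] ys(1) show "map (cls V q) as \<in> R'" by simp
  qed (rule imageI)
  with induces_map_cls[OF f rel] show "as \<in> cup V q R' \<longleftrightarrow> bs \<in> cup V q (map f ` R')"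
    by (simp add: cup_def)
qed

lemma induces_rel_sim:
  assumes f: "induces V q \<pi> f" and inj: "inj_on f (qcarrier V q)"
    and pres: "map f ` quot_rel V q R = quot_rel V q R" and R: "rel_sim (simeq V q) R R"
  shows "rel_sim \<pi> R R"
proof -
  have "\<forall>xs\<in>quot_rel V q R. set xs \<subseteq> qcarrier V q" by (auto simp: quot_rel_def)
  from induces_rel_sim_cup[OF f inj this] show ?thesis by (simp add: pres cup_quot_rel[OF R])
qed

lemma induces_preserves_quot_quant:
  assumes f: "induces V q \<pi> f" and bij: "bij_betw f (qcarrier V q) (qcarrier V q)"
    and Q: "quant_inv (simeq V q) \<pi> ks Q"
  shows "preserves (qcarrier V q) f (Quant ks (quot_quant V q ks Q))"
proof (simp only: preserves.simps, intro allI impI)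
  fix Rs assume Rs: "args_on (qcarrier V q) ks Rs"
  define Ss where "Ss = map (\<lambda>R. map f ` R) Rs"
  have Ss: "args_on (qcarrier V q) ks Ss"
    using Rs bij_betw_imp_surj_on[OF bij]
    unfolding args_on_def rel_on_def Ss_def by (auto, blast)
  have "list_all2 (rel_sim \<pi>) (map (cup V q) Rs) (map (cup V q) Ss)"
    using Rs induces_rel_sim_cup[OF f bij_betw_imp_inj_on[OF bij]]
    by (auto simp: list_all2_conv_all_nth Ss_def args_on_def rel_on_def)
  moreover have "args_on UNIV ks (map (cup V q) Rs)" "args_on UNIV ks (map (cup V q) Ss)"
    using Rs Ss by (auto simp: args_on_def intro: rel_on_cup)
  moreover have "\<forall>R\<in>set (map (cup V q) Rs). rel_sim (simeq V q) R R"
    "\<forall>S\<in>set (map (cup V q) Ss). rel_sim (simeq V q) S S"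
    by (simp_all add: rel_sim_simeq_cup)
  ultimately have "map (cup V q) Rs \<in> Q \<longleftrightarrow> map (cup V q) Ss \<in> Q"
    using Q unfolding quant_inv_def by blast
  with Rs Ss show "Rs \<in> quot_quant V q ks Q \<longleftrightarrow> map (\<lambda>R. map f ` R) Rs \<in> quot_quant V q ks Q"
    by (simp add: quot_quant_def Ss_def)
qed

lemma preserves_quot_quant_imp_quant_inv:
  assumes sim: "similarity \<pi>" and f: "induces V q \<pi> f"
    and pres: "preserves (qcarrier V q) f (Quant ks (quot_quant V q ks Q))"
  shows "quant_inv (simeq V q) \<pi> ks Q"
  unfolding quant_inv_def
proof (intro allI impI)
  fix Rs Ss
  assume Rs: "args_on UNIV ks Rs" and Ss: "args_on UNIV ks Ss"
    and Rs_inv: "\<forall>R\<in>set Rs. rel_sim (simeq V q) R R"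
    and Ss_inv: "\<forall>S\<in>set Ss. rel_sim (simeq V q) S S"
    and rel: "list_all2 (rel_sim \<pi>) Rs Ss"
  \<comment> \<open>\<open>\<sim>\<close>-invariant relations are recovered from their quotients by \<open>cup\<close>\<close>
  define Rs' where "Rs' = map (quot_rel V q) Rs"
  define Ss' where "Ss' = map (quot_rel V q) Ss"
  have Rs': "args_on (qcarrier V q) ks Rs'" and Ss': "args_on (qcarrier V q) ks Ss'"
    using Rs Ss by (auto simp: args_on_def rel_on_def Rs'_def Ss'_def quot_rel_def)
  have "list_all2 (\<lambda>R S. map f ` quot_rel V q R = quot_rel V q S) Rs Ss"
    using rel by (rule list_all2_mono) (rule induces_quot_rel[OF sim f])
  then have "map (\<lambda>R. map f ` R) Rs' = Ss'"
    by (simp add: Rs'_def Ss'_def list.rel_map flip: list.rel_eq)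
  moreover have "map (cup V q) Rs' = Rs" "map (cup V q) Ss' = Ss"
    using Rs_inv Ss_inv by (simp_all add: Rs'_def Ss'_def map_idI cup_quot_rel)
  moreover have "Rs' \<in> quot_quant V q ks Q \<longleftrightarrow> map (\<lambda>R. map f ` R) Rs' \<in> quot_quant V q ks Q"
    using pres Rs' by simp
  ultimately show "Rs \<in> Q \<longleftrightarrow> Ss \<in> Q"
    using Rs' Ss' by (simp add: quot_quant_def)
qed

lemma Sim_obtain_induced:
  assumes \<pi>: "\<pi> \<in> Sim V q"
  obtains f where "induces V q \<pi> f"
proof -
  obtain g where g: "\<And>a. (a, g a) \<in> \<pi>" using similarity_choice Sim_similarity[OF \<pi>] by blast
  define f where "f X = cls V q (g (SOME a. a \<in> X))" for X
  have "f (cls V q a) = cls V q b" if "(a, b) \<in> \<pi>" for a b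
  proof -
    have "(SOME a'. a' \<in> cls V q a) \<in> cls V q a"
      by (rule someI[of _ a]) (simp add: cls_def simeq_refl)
    then have "(a, SOME a'. a' \<in> cls V q a) \<in> simeq V q" by (simp add: cls_def)
    with Sim_simeq_iff[OF \<pi> that g] show ?thesis by (simp add: f_def cls_eq_iff simeq_sym)
  qed
  then have "induces V q \<pi> f" by (simp add: induces_def)
  then show ?thesis by (rule that)
qed

lemma Sim_induces_bij:
  assumes \<pi>: "\<pi> \<in> Sim V q" and f: "induces V q \<pi> f"
  shows "bij_betw f (qcarrier V q) (qcarrier V q)"
proof -
  obtain g where g: "\<And>a. (a, g a) \<in> \<pi>" using similarity_choice Sim_similarity[OF \<pi>] by blast
  obtain h where h: "\<And>b. (b, h b) \<in> \<pi>\<inverse>"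
    using similarity_choice Sim_similarity[OF \<pi>] similarity_converse by blast
  have fg: "f (cls V q a) = cls V q (g a)" for a using f g by (simp add: induces_def)
  have fh: "f (cls V q (h b)) = cls V q b" for b using f h[of b] unfolding induces_def by simp
  have "inj_on f (qcarrier V q)"
  proof (rule inj_onI)
    fix X Y assume "X \<in> qcarrier V q" "Y \<in> qcarrier V q" and eq: "f X = f Y"
    then obtain a a' where X: "X = cls V q a" and Y: "Y = cls V q a'" by (auto simp: qcarrier_eq)
    with eq have "(g a, g a') \<in> simeq V q" by (simp add: fg cls_eq_iff)
    with Sim_simeq_iff[OF \<pi> g g] show "X = Y" by (simp add: X Y cls_eq_iff)
  qed
  moreover have "f ` qcarrier V q = qcarrier V q"
  proof
    show "f ` qcarrier V q \<subseteq> qcarrier V q" by (auto simp: qcarrier_eq fg)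
    show "qcarrier V q \<subseteq> f ` qcarrier V q"
    proof
      fix Y assume "Y \<in> qcarrier V q"
      then obtain b where "Y = cls V q b" by (auto simp: qcarrier_eq)
      then have "Y = f (cls V q (h b))" by (simp add: fh)
      then show "Y \<in> f ` qcarrier V q" by (simp add: imageI)
    qed
  qed
  ultimately show ?thesis by (simp add: bij_betw_def)
qed

lemma Sim_induces_Aut:
  assumes \<pi>: "\<pi> \<in> Sim V q" and f: "induces V q \<pi> f"
  shows "f \<in> Aut (qcarrier V q) (quot_ops V q)"
proof -
  have bij: "bij_betw f (qcarrier V q) (qcarrier V q)" by (rule Sim_induces_bij[OF \<pi> f])
  have "preserves (qcarrier V q) f (quot_oper V q op)" if "op \<in> q" for op
  proof (cases op)
    case (Rel k R)
    with \<pi> that have "rel_sim \<pi> R R" by (simp add: Sim_def)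
    with Rel show ?thesis by (simp add: induces_quot_rel[OF Sim_similarity[OF \<pi>] f])
  next
    case (Quant ks Q)
    with \<pi> that have "quant_inv (simeq V q) \<pi> ks Q" by (simp add: Sim_def)
    from induces_preserves_quot_quant[OF f bij this] Quant show ?thesis by simp
  qed
  with bij show ?thesis unfolding Aut_def quot_ops_def by blast
qed

definition pullback :: "'v itself \<Rightarrow> 'a oper set \<Rightarrow> ('a set \<Rightarrow> 'a set) \<Rightarrow> ('a \<times> 'a) set" where
  "pullback V q f = {(a, b). f (cls V q a) = cls V q b}"

lemma induces_pullback: "induces V q (pullback V q f) f"
  by (simp add: induces_def pullback_def)

lemma similarity_pullback:
  assumes "bij_betw f (qcarrier V q) (qcarrier V q)"
  shows "similarity (pullback V q f)"
proof -
  have "f (cls V q a) \<in> qcarrier V q" "cls V q b \<in> f ` qcarrier V q" for a b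
    using bij_betw_imp_surj_on[OF assms] by auto
  then show ?thesis by (fastforce simp: similarity_def pullback_def qcarrier_eq)
qed

lemma Aut_pullback_Sim:
  fixes V :: "'v itself"
  assumes inf: "infinite (UNIV :: 'v set)" and wf: "\<forall>op\<in>q. wf_oper UNIV op"
    and f: "f \<in> Aut (qcarrier V q) (quot_ops V q)"
  shows "pullback V q f \<in> Sim V q"
proof -
  have bij: "bij_betw f (qcarrier V q) (qcarrier V q)" using f by (simp add: Aut_def)
  have pres: "preserves (qcarrier V q) f (quot_oper V q op)" if "op \<in> q" for op
    using f that by (simp add: Aut_def quot_ops_def)
  have "rel_sim (pullback V q f) R R" if R: "Rel k R \<in> q" for k R
  proof (rule induces_rel_sim[OF induces_pullback bij_betw_imp_inj_on[OF bij]])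
    show "map f ` quot_rel V q R = quot_rel V q R" using pres[OF R] by simp
    show "rel_sim (simeq V q) R R" using Rel_simeq_invariant[OF inf R] wf R by fastforce
  qed
  moreover have "quant_inv (simeq V q) (pullback V q f) ks Q" if "Quant ks Q \<in> q" for ks Q
    using pres[OF that] similarity_pullback[OF bij]
    by (intro preserves_quot_quant_imp_quant_inv[OF _ induces_pullback]) simp_all
  ultimately show ?thesis using similarity_pullback[OF bij] by (simp add: Sim_def)
qed

lemma quot_sim_image_Sim:
  fixes V :: "'v itself"
  assumes "infinite (UNIV :: 'v set)" and "\<forall>op\<in>q. wf_oper UNIV op"
  shows "quot_sim V q ` Sim V q = graph_on (qcarrier V q) ` Aut (qcarrier V q) (quot_ops V q)"
proof (intro equalityI subsetI; elim imageE; hypsubst)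
  fix \<pi> assume \<pi>: "\<pi> \<in> Sim V q"
  then obtain f where f: "induces V q \<pi> f" by (rule Sim_obtain_induced)
  with \<pi> have "quot_sim V q \<pi> = graph_on (qcarrier V q) f"
    by (simp add: induces_quot_sim Sim_similarity)
  with Sim_induces_Aut[OF \<pi> f]
  show "quot_sim V q \<pi> \<in> graph_on (qcarrier V q) ` Aut (qcarrier V q) (quot_ops V q)" by blast
next
  fix f assume f: "f \<in> Aut (qcarrier V q) (quot_ops V q)"
  then have "similarity (pullback V q f)" by (simp add: Aut_def similarity_pullback)
  from induces_quot_sim[OF this induces_pullback]
  have "graph_on (qcarrier V q) f = quot_sim V q (pullback V q f)" ..
  with Aut_pullback_Sim[OF assms f] show "graph_on (qcarrier V q) f \<in> quot_sim V q ` Sim V q"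
    by blast
qed

lemma Quant_Inv_Sim_iff:
  fixes V :: "'v itself"
  assumes inf: "infinite (UNIV :: 'v set)" and wf: "\<forall>op\<in>q. wf_oper UNIV op"
    and Q: "wf_oper UNIV (Quant ks Q)"
  shows "Quant ks Q \<in> Inv (Sim V q)
    \<longleftrightarrow> Quant ks (quot_quant V q ks Q) \<in> InvA (qcarrier V q) (Aut (qcarrier V q) (quot_ops V q))"
proof -
  have "Quant ks Q \<in> Inv (Sim V q) \<longleftrightarrow> (\<forall>\<pi>\<in>Sim V q. quant_inv (simeq V q) \<pi> ks Q)"
    using Q by (simp add: Inv_def approx_Sim_eq_simeq[OF inf wf])
  also have "\<dots> \<longleftrightarrow> (\<forall>f\<in>Aut (qcarrier V q) (quot_ops V q).
      preserves (qcarrier V q) f (Quant ks (quot_quant V q ks Q)))"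
  proof (intro iffI ballI)
    fix f assume "\<forall>\<pi>\<in>Sim V q. quant_inv (simeq V q) \<pi> ks Q" "f \<in> Aut (qcarrier V q) (quot_ops V q)"
    with Aut_pullback_Sim[OF inf wf]
    show "preserves (qcarrier V q) f (Quant ks (quot_quant V q ks Q))"
      by (intro induces_preserves_quot_quant[OF induces_pullback]) (auto simp: Aut_def)
  next
    fix \<pi> assume pres: "\<forall>f\<in>Aut (qcarrier V q) (quot_ops V q).
      preserves (qcarrier V q) f (Quant ks (quot_quant V q ks Q))" and \<pi>: "\<pi> \<in> Sim V q"
    obtain f where f: "induces V q \<pi> f" using Sim_obtain_induced[OF \<pi>] .
    with pres Sim_induces_Aut[OF \<pi> f] show "quant_inv (simeq V q) \<pi> ks Q"
      by (intro preserves_quot_quant_imp_quant_inv[OF Sim_similarity[OF \<pi>] f]) simp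
  qed
  also have "\<dots> \<longleftrightarrow>
      Quant ks (quot_quant V q ks Q) \<in> InvA (qcarrier V q) (Aut (qcarrier V q) (quot_ops V q))"
    by (simp add: InvA_def quot_quant_def)
  finally show ?thesis .
qed

theorem proposition17:
  fixes q :: "'a oper set"
  assumes "infinite (UNIV :: 'v set)"
    and "\<forall>op\<in>q. wf_oper UNIV op"
  shows "quot_sim TYPE('v) q ` Sim TYPE('v) q
           = graph_on (qcarrier TYPE('v) q) ` Aut (qcarrier TYPE('v) q) (quot_ops TYPE('v) q)
         \<and> (\<forall>ks Q. wf_oper UNIV (Quant ks Q) \<longrightarrow>
           (Quant ks Q \<in> Inv (Sim TYPE('v) q) \<longleftrightarrow>
            Quant ks (quot_quant TYPE('v) q ks Q)
              \<in> InvA (qcarrier TYPE('v) q) (Aut (qcarrier TYPE('v) q) (quot_ops TYPE('v) q))))"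
proof (intro conjI allI impI)
  show "quot_sim TYPE('v) q ` Sim TYPE('v) q
      = graph_on (qcarrier TYPE('v) q) ` Aut (qcarrier TYPE('v) q) (quot_ops TYPE('v) q)"
    by (rule quot_sim_image_Sim[OF assms])
  show "Quant ks Q \<in> Inv (Sim TYPE('v) q) \<longleftrightarrow> Quant ks (quot_quant TYPE('v) q ks Q)
      \<in> InvA (qcarrier TYPE('v) q) (Aut (qcarrier TYPE('v) q) (quot_ops TYPE('v) q))"
    if "wf_oper UNIV (Quant ks Q)" for ks and Q :: "'a list set list set"
    using that by (rule Quant_Inv_Sim_iff[OF assms])
qed

end
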